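(* Let $V:\mathcal{M}^+(\mathbb{R}^d)\to\mathcal{M}^+(\mathbb{R}^d\times\mathbb{R}^d)$ satisfy $\pi_1^{\#}V[\mu]=\mu$ for all $\mu$, and suppose that for every $R>0$ there is a constant $C_F(R)$ such that $\mathcal{W}^g(V[\mu],V[\nu])\le C_F(R)\|\mu-\nu\|_{BL^*}$ whenever $\mu,\nu$ are supported in $B(0,R)$. Then: (V2) for every $R>0$ there is a constant $C$ such that $\|V[\mu]-V[\nu]\|_{BL^*}\le C\|\mu-\nu\|_{BL^*}$ whenever $\mu,\nu$ are supported in $B(0,R)$; and (V3) for every $R>0$ there is $C_H(R)$ such that whenever $\mu,\nu$ are supported in $B(0,R)$, for all $\tau>0$, $$\sup_{\|\psi\|_{BL(\mathbb{R}^d)}\le1}\int_{\mathbb{R}^d\times\mathbb{R}^d}\psi(x+\tau v)\,d(V[\mu]-V[\nu])(x,v)\le(1+C_H(R)\tau)\|\mu-\nu\|_{BL^*}.$$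
   Context: $\mathcal{M}^+(\mathbb{R}^k)$: finite nonnegative Borel measures; $\pi_1(x,v)=x$. $\|f\|_{BL}=\max(\sup|f|,\operatorname{Lip}f)$, $\|\mu\|_{BL^*}=\sup\{\int\psi\,d\mu:\|\psi\|_{BL}\le1\}$, $\|\cdot\|_{TV}$ total variation. For nonnegative measures $\alpha,\beta$ of equal finite mass on $\mathbb{R}^d$, $W_1(\alpha,\beta)=\inf\int|x-y|\,d\gamma$ over couplings $\gamma$ (nonnegative measures on $\mathbb{R}^{2d}$ with marginals $\alpha,\beta$); $\mathcal{P}^{opt}(\alpha,\beta)$ is the set of minimizing couplings. For $\tilde V_1,\tilde V_2\in\mathcal{M}^+(\mathbb{R}^d\times\mathbb{R}^d)$ of equal mass, $\mathcal{P}(\tilde V_1,\tilde V_2)$ is the set of nonnegative measures $p$ on $(\mathbb{R}^d)^4$ (variables $(x,v,y,w)$) with $\pi_{12}^{\#}p=\tilde V_1$, $\pi_{34}^{\#}p=\tilde V_2$. For $V_1,V_2\in\mathcal{M}^+(\mathbb{R}^d\times\mathbb{R}^d)$ with $\mu_i=\pi_1^{\#}V_i$, define $\mathcal{W}^g(V_1,V_2)=\inf\{\int|v-w|\,dp(x,v,y,w)\}$, the infimum over all $\tilde V_1\le V_1$, $\tilde V_2\le V_2$ (nonnegative submeasures), with $\tilde\mu_i=\pi_1^{\#}\tilde V_i$, and $p\in\mathcal{P}(\tilde V_1,\tilde V_2)$ such that $\|\mu_1-\mu_2\|_{BL^*}=\|\mu_1-\tilde\mu_1\|_{TV}+\|\mu_2-\tilde\mu_2\|_{TV}+W_1(\tilde\mu_1,\tilde\mu_2)$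 and $\pi_{13}^{\#}p\in\mathcal{P}^{opt}(\tilde\mu_1,\tilde\mu_2)$. *)

theory Defs
  imports "HOL-Analysis.Analysis"
begin

definition Mplus :: "'a::euclidean_space measure set" where
  "Mplus = {M. sets M = sets borel \<and> finite_measure M}"

definition submeasure :: "'a::euclidean_space measure \<Rightarrow> 'a measure \<Rightarrow> bool" where
  "submeasure N M \<longleftrightarrow> N \<in> Mplus \<and> (\<forall>A\<in>sets borel. emeasure N A \<le> emeasure M A)"

definition supported_in :: "'a::euclidean_space measure \<Rightarrow> real \<Rightarrow> bool" where
  "supported_in M R \<longleftrightarrow> emeasure M (space M - cball 0 R) = 0"

definition BL_unit :: "('a::euclidean_space \<Rightarrow> real) \<Rightarrow> bool" where
  "BL_unit f \<longleftrightarrow> (\<forall>x. \<bar>f x\<bar> \<le> 1) \<and> (\<forall>x y. \<bar>f x - f y\<bar> \<le> dist x y)"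

definition BL_dist :: "'a::euclidean_space measure \<Rightarrow> 'a measure \<Rightarrow> real" where
  "BL_dist \<mu> \<nu> = Sup {(\<integral>x. \<psi> x \<partial>\<mu>) - (\<integral>x. \<psi> x \<partial>\<nu>) | \<psi>. BL_unit \<psi>}"

definition TV_dist :: "'a::euclidean_space measure \<Rightarrow> 'a measure \<Rightarrow> real" where
  "TV_dist \<mu> \<nu> = Sup {(\<integral>x. f x \<partial>\<mu>) - (\<integral>x. f x \<partial>\<nu>) | f.
      f \<in> borel_measurable borel \<and> (\<forall>x. \<bar>f x\<bar> \<le> 1)}"

definition couplings :: "'a::euclidean_space measure \<Rightarrow> 'a measure \<Rightarrow> ('a \<times> 'a) measure set" where
  "couplings \<alpha> \<beta> = {\<gamma>. \<gamma> \<in> Mplus \<and> distr \<gamma> borel fst = \<alpha> \<and> distr \<gamma> borel snd = \<beta>}"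

definition W1 :: "'a::euclidean_space measure \<Rightarrow> 'a measure \<Rightarrow> ennreal" where
  "W1 \<alpha> \<beta> = (INF \<gamma>\<in>couplings \<alpha> \<beta>. \<integral>\<^sup>+ z. ennreal (dist (fst z) (snd z)) \<partial>\<gamma>)"

definition opt_couplings :: "'a::euclidean_space measure \<Rightarrow> 'a measure \<Rightarrow> ('a \<times> 'a) measure set" where
  "opt_couplings \<alpha> \<beta> = {\<gamma>\<in>couplings \<alpha> \<beta>. (\<integral>\<^sup>+ z. ennreal (dist (fst z) (snd z)) \<partial>\<gamma>) = W1 \<alpha> \<beta>}"

definition transport_plans :: "('a::euclidean_space \<times> 'a) measure \<Rightarrow> ('a \<times> 'a) measure
    \<Rightarrow> (('a \<times> 'a) \<times> ('a \<times> 'a)) measure set" where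
  "transport_plans V1 V2 = {p. p \<in> Mplus \<and> distr p borel fst = V1 \<and> distr p borel snd = V2}"

definition pi13 :: "('a \<times> 'a) \<times> ('a \<times> 'a) \<Rightarrow> 'a \<times> 'a" where
  "pi13 z = (fst (fst z), fst (snd z))"

definition Wg :: "('a::euclidean_space \<times> 'a) measure \<Rightarrow> ('a \<times> 'a) measure \<Rightarrow> ennreal" where
  "Wg V1 V2 = (INF p \<in> {p. \<exists>U1 U2.
        submeasure U1 V1 \<and> submeasure U2 V2 \<and> p \<in> transport_plans U1 U2 \<and>
        ennreal (BL_dist (distr V1 borel fst) (distr V2 borel fst)) =
          ennreal (TV_dist (distr V1 borel fst) (distr U1 borel fst))
          + ennreal (TV_dist (distr V2 borel fst) (distr U2 borel fst))
          + W1 (distr U1 borel fst) (distr U2 borel fst) \<and>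
        distr p borel pi13 \<in> opt_couplings (distr U1 borel fst) (distr U2 borel fst)}.
      \<integral>\<^sup>+ z. ennreal (dist (snd (fst z)) (snd (snd z))) \<partial>p)"

definition V3_quantity :: "real \<Rightarrow> ('a::euclidean_space \<times> 'a) measure \<Rightarrow> ('a \<times> 'a) measure \<Rightarrow> real" where
  "V3_quantity \<tau> V1 V2 = Sup {(\<integral>z. \<psi> (fst z + \<tau> *\<^sub>R snd z) \<partial>V1) - (\<integral>z. \<psi> (fst z + \<tau> *\<^sub>R snd z) \<partial>V2)
      | \<psi>. BL_unit \<psi>}"

end

theory Submission
  imports Defs
begin

(*
  Call phi a test function of weight tau if |phi| <= 1 and
  phi (x, v) - phi (y, w) <= |x - y| + tau |v - w|. Bounded-Lipschitz functions of (x, v)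
  are test functions of weight 1, and psi (x + tau v) with psi bounded-Lipschitz is one of
  weight tau, so (V2) and (V3) both follow from the bound
    int phi dV[mu] - int phi dV[nu] <= (1 + tau C_F) ||mu - nu||_BL*.
  For it, take any plan p admissible in the definition of W^g (V[mu], V[nu]), with
  submeasures U1 <= V[mu] and U2 <= V[nu]. Discarding the excess mass V[mu] - U1 and
  V[nu] - U2 changes the integral of phi by at most the two TV terms, and moving U1 to U2
  along p costs at most W1 + tau int |v - w| dp, because the position marginal of p is an
  optimal coupling. Admissibility makes the TV terms and W1 add up to ||mu - nu||_BL*, and
  the infimum over p turns the last term into tau W^g <= tau C_F ||mu - nu||_BL*.
*)

lemma ennreal_add_le: "ennreal (a + b) \<le> ennreal a + ennreal b"
proof (cases "0 \<le> a \<and> 0 \<le> b")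
  case True
  then show ?thesis by (simp add: ennreal_plus)
next
  case False
  then have "a + b \<le> a \<or> a + b \<le> b" by linarith
  then show ?thesis
    by (metis add.commute add_increasing2 ennreal_leI zero_le)
qed

lemma Mplus_space: "M \<in> Mplus \<Longrightarrow> space M = UNIV"
  unfolding Mplus_def using sets_eq_imp_space_eq[of M borel] by simp

lemma finite_measure_Mplus: "M \<in> Mplus \<Longrightarrow> finite_measure M"
  unfolding Mplus_def by simp

lemma borel_measurable_Mplus:
  assumes "f \<in> borel_measurable borel" and M: "M \<in> Mplus"
  shows "f \<in> borel_measurable M"
proof -
  have "sets M = sets borel" using M unfolding Mplus_def by simp
  then show ?thesis using assms(1) measurable_cong_sets[of M borel borel borel] by simp
qed

lemma continuous_borel_measurable_Mplus:
  "continuous_on UNIV f \<Longrightarrow> M \<in> Mplus \<Longrightarrow> f \<in> borel_measurable M"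
  using borel_measurable_Mplus borel_measurable_continuous_onI by blast

lemma integrable_Mplus_bounded:
  assumes "M \<in> Mplus" "f \<in> borel_measurable borel" "\<And>x. \<bar>f x\<bar> \<le> (B::real)"
  shows "integrable M f"
  using assms by (intro finite_measure.integrable_const_bound[where B=B] finite_measure_Mplus)
    (auto simp: borel_measurable_Mplus)

lemma abs_integral_le_measure_Mplus:
  assumes "M \<in> Mplus" "f \<in> borel_measurable borel" "\<And>x. \<bar>f x\<bar> \<le> (1::real)"
  shows "\<bar>integral\<^sup>L M f\<bar> \<le> measure M UNIV"
proof -
  have "\<bar>integral\<^sup>L M f\<bar> \<le> integral\<^sup>L M (\<lambda>_. 1::real)"
    using assms by (intro integral_abs_bound_integral integrable_Mplus_bounded[of M _ 1]) auto
  then show ?thesis using Mplus_space[OF assms(1)] by simp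
qed

lemma distr_fst_Mplus: "M \<in> Mplus \<Longrightarrow> distr M borel fst \<in> Mplus"
  unfolding Mplus_def
  by (auto intro!: finite_measure.finite_measure_distr continuous_borel_measurable_Mplus
      continuous_intros simp: Mplus_def)

lemma measure_distr_fst_UNIV: "M \<in> Mplus \<Longrightarrow> measure (distr M borel fst) UNIV = measure M UNIV"
  using measure_distr[of fst M borel UNIV] Mplus_space[of M]
  by (simp add: continuous_borel_measurable_Mplus continuous_on_fst)

lemma integral_diff_le_measure_diff_submeasure:
  assumes U: "submeasure U V" and V: "V \<in> Mplus"
    and f: "f \<in> borel_measurable borel" "\<And>x. \<bar>f x\<bar> \<le> (1::real)"
  shows "integral\<^sup>L V f - integral\<^sup>L U f \<le> measure V UNIV - measure U UNIV"
proof -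
  have UM: "U \<in> Mplus" using U unfolding submeasure_def by simp
  have sets: "sets U = sets V" using UM V unfolding Mplus_def by simp
  have "U \<le> V"
    using U V sets unfolding submeasure_def Mplus_def by (subst le_measure[OF sets]) simp
  define g where "g x = 1 - f x" for x
  have g: "g \<in> borel_measurable borel" "\<And>x. \<bar>g x\<bar> \<le> 2" "\<And>x. 0 \<le> g x"
    unfolding g_def using f by (auto simp: abs_le_iff)
  have "ennreal (integral\<^sup>L U g) = (\<integral>\<^sup>+ x. ennreal (g x) \<partial>U)"
    using g by (intro nn_integral_eq_integral[symmetric] integrable_Mplus_bounded[OF UM]) auto
  also have "\<dots> \<le> (\<integral>\<^sup>+ x. ennreal (g x) \<partial>V)"
    by (rule nn_integral_mono_measure[OF sets \<open>U \<le> V\<close>])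
  also have "\<dots> = ennreal (integral\<^sup>L V g)"
    using g by (intro nn_integral_eq_integral integrable_Mplus_bounded[OF V]) auto
  finally have "integral\<^sup>L U g \<le> integral\<^sup>L V g"
    using g by (simp add: ennreal_le_iff integral_nonneg)
  moreover have "integral\<^sup>L M g = measure M UNIV - integral\<^sup>L M f" if "M \<in> Mplus" for M
    unfolding g_def using that f Mplus_space[OF that]
    by (subst Bochner_Integration.integral_diff) (auto intro: integrable_Mplus_bounded)
  ultimately show ?thesis using UM V by simp
qed

lemma bdd_above_integral_diffs:
  assumes "M \<in> Mplus" "N \<in> Mplus"
    and "\<And>f. P f \<Longrightarrow> f \<in> borel_measurable borel \<and> (\<forall>x. \<bar>f x\<bar> \<le> (1::real))"
  shows "bdd_above {integral\<^sup>L M f - integral\<^sup>L N f | f. P f}"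
proof (rule bdd_aboveI)
  fix y assume "y \<in> {integral\<^sup>L M f - integral\<^sup>L N f | f. P f}"
  then obtain f where "y = integral\<^sup>L M f - integral\<^sup>L N f" "P f" by blast
  with assms abs_integral_le_measure_Mplus[of M f] abs_integral_le_measure_Mplus[of N f]
  show "y \<le> measure M UNIV + measure N UNIV" by fastforce
qed

lemma BL_unit_borel_measurable: "BL_unit f \<Longrightarrow> f \<in> borel_measurable borel"
  unfolding BL_unit_def
  by (intro borel_measurable_continuous_onI lipschitz_on_continuous_on[where L=1])
    (simp add: lipschitz_on_def dist_real_def)

lemma BL_dist_nonneg: "M \<in> Mplus \<Longrightarrow> N \<in> Mplus \<Longrightarrow> 0 \<le> BL_dist M N"
  unfolding BL_dist_def
  by (rule cSup_upper2[where x=0], rule CollectI, rule exI[where x="\<lambda>_. 0"])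
    (auto simp: BL_unit_def intro!: bdd_above_integral_diffs BL_unit_borel_measurable)

lemma Sup_BL_unit_le:
  assumes "\<And>\<psi>. BL_unit \<psi> \<Longrightarrow> F \<psi> \<le> (c::real)"
  shows "Sup {F \<psi> | \<psi>. BL_unit \<psi>} \<le> c"
proof (rule cSup_least)
  have "BL_unit (\<lambda>_. 0)" by (simp add: BL_unit_def)
  then show "{F \<psi> | \<psi>. BL_unit \<psi>} \<noteq> {}" by blast
qed (use assms in blast)

lemma integral_diff_le_TV_dist:
  assumes "M \<in> Mplus" "N \<in> Mplus" "f \<in> borel_measurable borel" "\<And>x. \<bar>f x\<bar> \<le> 1"
  shows "integral\<^sup>L M f - integral\<^sup>L N f \<le> TV_dist M N"
  unfolding TV_dist_def using assms by (intro cSup_upper bdd_above_integral_diffs) auto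

lemma integral_diff_le_TV_dist_fst_submeasure:
  assumes U: "submeasure U V" and V: "V \<in> Mplus"
    and f: "f \<in> borel_measurable borel" "\<And>x. \<bar>f x\<bar> \<le> (1::real)"
  shows "integral\<^sup>L V f - integral\<^sup>L U f \<le> TV_dist (distr V borel fst) (distr U borel fst)"
proof -
  have UM: "U \<in> Mplus" using U unfolding submeasure_def by simp
  have "integral\<^sup>L V f - integral\<^sup>L U f \<le> measure V UNIV - measure U UNIV"
    by (rule integral_diff_le_measure_diff_submeasure[OF U V f])
  also have "\<dots> = integral\<^sup>L (distr V borel fst) (\<lambda>_. 1) - integral\<^sup>L (distr U borel fst) (\<lambda>_. 1)"
    using V UM by (simp add: measure_distr_fst_UNIV Mplus_space distr_fst_Mplus)
  also have "\<dots> \<le> TV_dist (distr V borel fst) (distr U borel fst)"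
    using V UM by (intro integral_diff_le_TV_dist distr_fst_Mplus) auto
  finally show ?thesis .
qed

definition split_lipschitz_test :: "real \<Rightarrow> ('a::euclidean_space \<times> 'a \<Rightarrow> real) \<Rightarrow> bool" where
  "split_lipschitz_test \<tau> \<phi> \<longleftrightarrow> \<phi> \<in> borel_measurable borel \<and> (\<forall>z. \<bar>\<phi> z\<bar> \<le> 1) \<and>
     (\<forall>x v y w. \<phi> (x, v) - \<phi> (y, w) \<le> dist x y + \<tau> * dist v w)"

lemma BL_unit_split_lipschitz_test: "BL_unit \<psi> \<Longrightarrow> split_lipschitz_test 1 \<psi>"
  unfolding split_lipschitz_test_def
proof (intro conjI allI BL_unit_borel_measurable)
  fix x v y w :: 'a
  assume "BL_unit \<psi>"
  then have "\<psi> (x, v) - \<psi> (y, w) \<le> dist (x, v) (y, w)"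
    unfolding BL_unit_def by (meson abs_le_D1)
  also have "\<dots> \<le> dist x y + dist v w"
    unfolding dist_Pair_Pair by (rule sqrt_sum_squares_le_sum) auto
  finally show "\<psi> (x, v) - \<psi> (y, w) \<le> dist x y + 1 * dist v w" by simp
qed (auto simp: BL_unit_def)

lemma split_lipschitz_test_free_flight:
  assumes \<psi>: "BL_unit \<psi>" and \<tau>: "0 \<le> \<tau>"
  shows "split_lipschitz_test \<tau> (\<lambda>z. \<psi> (fst z + \<tau> *\<^sub>R snd z))"
  unfolding split_lipschitz_test_def
proof (intro conjI allI)
  show "(\<lambda>z. \<psi> (fst z + \<tau> *\<^sub>R snd z)) \<in> borel_measurable borel"
    by (rule measurable_compose[OF borel_measurable_continuous_onI BL_unit_borel_measurable[OF \<psi>]])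
      (intro continuous_intros)
  fix x v y w :: 'a
  have "\<psi> (x + \<tau> *\<^sub>R v) - \<psi> (y + \<tau> *\<^sub>R w) \<le> dist (x + \<tau> *\<^sub>R v) (y + \<tau> *\<^sub>R w)"
    using \<psi> unfolding BL_unit_def by (simp add: abs_le_iff)
  also have "\<dots> = norm ((x - y) + \<tau> *\<^sub>R (v - w))"
    by (simp add: dist_norm algebra_simps)
  also have "\<dots> \<le> dist x y + \<tau> * dist v w"
    using norm_triangle_ineq[of "x - y" "\<tau> *\<^sub>R (v - w)"] \<tau> by (simp add: dist_norm)
  finally show "\<psi> (fst (x, v) + \<tau> *\<^sub>R snd (x, v)) - \<psi> (fst (y, w) + \<tau> *\<^sub>R snd (y, w))
      \<le> dist x y + \<tau> * dist v w" by simp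
qed (use \<psi> in \<open>auto simp: BL_unit_def\<close>)

lemma BL_dist_le_if_split_lipschitz_bound:
  assumes "\<And>\<phi>. split_lipschitz_test 1 \<phi> \<Longrightarrow> integral\<^sup>L V1 \<phi> - integral\<^sup>L V2 \<phi> \<le> c"
  shows "BL_dist V1 V2 \<le> c"
  unfolding BL_dist_def by (intro Sup_BL_unit_le assms BL_unit_split_lipschitz_test)

lemma V3_quantity_le_if_split_lipschitz_bound:
  assumes "0 \<le> \<tau>"
    and "\<And>\<phi>. split_lipschitz_test \<tau> \<phi> \<Longrightarrow> integral\<^sup>L V1 \<phi> - integral\<^sup>L V2 \<phi> \<le> c"
  shows "V3_quantity \<tau> V1 V2 \<le> c"
  unfolding V3_quantity_def
  using assms(2)[OF split_lipschitz_test_free_flight[OF _ assms(1)]] by (intro Sup_BL_unit_le) simp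

lemma integral_diff_le_transport_cost:
  assumes p: "p \<in> transport_plans U1 U2" and \<phi>: "split_lipschitz_test \<tau> \<phi>" and \<tau>: "0 \<le> \<tau>"
  shows "ennreal (integral\<^sup>L U1 \<phi> - integral\<^sup>L U2 \<phi>)
     \<le> (\<integral>\<^sup>+ z. ennreal (dist (fst (fst z)) (fst (snd z))) \<partial>p)
        + ennreal \<tau> * (\<integral>\<^sup>+ z. ennreal (dist (snd (fst z)) (snd (snd z))) \<partial>p)"
proof -
  have pM: "p \<in> Mplus" and marg: "distr p borel fst = U1" "distr p borel snd = U2"
    using p unfolding transport_plans_def by auto
  have \<phi>m: "\<phi> \<in> borel_measurable borel" and \<phi>b: "\<And>z. \<bar>\<phi> z\<bar> \<le> 1"
    and lip: "\<And>x v y w. \<phi> (x, v) - \<phi> (y, w) \<le> dist x y + \<tau> * dist v w"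
    using \<phi> unfolding split_lipschitz_test_def by auto
  define g where "g z = \<phi> (fst z) - \<phi> (snd z)" for z
  have m: "(\<lambda>z. \<phi> (fst z)) \<in> borel_measurable borel" "(\<lambda>z. \<phi> (snd z)) \<in> borel_measurable borel"
    by (rule measurable_compose[OF borel_measurable_continuous_onI \<phi>m], intro continuous_intros)+
  have int: "integrable p (\<lambda>z. \<phi> (fst z))" "integrable p (\<lambda>z. \<phi> (snd z))"
    using \<phi>b by (auto intro!: integrable_Mplus_bounded[OF pM _, of _ 1] m)
  have "integral\<^sup>L U1 \<phi> - integral\<^sup>L U2 \<phi> = integral\<^sup>L p g"
    using int \<phi>m pM unfolding g_def marg[symmetric]
    by (simp add: integral_distr continuous_borel_measurable_Mplus continuous_on_fst continuous_on_snd)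
  also have "\<dots> \<le> integral\<^sup>L p (\<lambda>z. max (g z) 0)"
    using int unfolding g_def by (intro integral_mono) auto
  finally have "ennreal (integral\<^sup>L U1 \<phi> - integral\<^sup>L U2 \<phi>) \<le> \<integral>\<^sup>+ z. ennreal (max (g z) 0) \<partial>p"
    using int unfolding g_def by (subst nn_integral_eq_integral) (auto intro!: ennreal_leI)
  also have "\<dots> \<le> \<integral>\<^sup>+ z. ennreal (dist (fst (fst z)) (fst (snd z)))
      + ennreal \<tau> * ennreal (dist (snd (fst z)) (snd (snd z))) \<partial>p"
  proof (rule nn_integral_mono)
    fix z :: "('a \<times> 'a) \<times> ('a \<times> 'a)"
    obtain x v y w where z: "z = ((x, v), (y, w))" by (metis prod.collapse)
    have "max (g z) 0 \<le> dist x y + \<tau> * dist v w"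
      using lip[of x v y w] \<tau> unfolding g_def z by simp
    then show "ennreal (max (g z) 0) \<le> ennreal (dist (fst (fst z)) (fst (snd z)))
        + ennreal \<tau> * ennreal (dist (snd (fst z)) (snd (snd z)))"
      unfolding z using \<tau> by (simp add: ennreal_plus[symmetric] ennreal_mult[symmetric] ennreal_leI del: ennreal_plus)
  qed
  also have "\<dots> = (\<integral>\<^sup>+ z. ennreal (dist (fst (fst z)) (fst (snd z))) \<partial>p)
        + ennreal \<tau> * (\<integral>\<^sup>+ z. ennreal (dist (snd (fst z)) (snd (snd z))) \<partial>p)"
  proof -
    have "(\<lambda>z. dist (fst (fst z)) (fst (snd z))) \<in> borel_measurable p"
      "(\<lambda>z. dist (snd (fst z)) (snd (snd z))) \<in> borel_measurable p"
      using pM by (auto intro!: continuous_borel_measurable_Mplus continuous_intros)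
    then show ?thesis by (subst nn_integral_add) (auto simp: nn_integral_cmult)
  qed
  finally show ?thesis .
qed

lemma nn_integral_position_cost_eq_W1:
  assumes "p \<in> Mplus" and "distr p borel pi13 \<in> opt_couplings \<alpha> \<beta>"
  shows "(\<integral>\<^sup>+ z. ennreal (dist (fst (fst z)) (fst (snd z))) \<partial>p) = W1 \<alpha> \<beta>"
proof -
  have "(\<integral>\<^sup>+ z. ennreal (dist (fst (fst z)) (fst (snd z))) \<partial>p)
      = (\<integral>\<^sup>+ z. ennreal (dist (fst z) (snd z)) \<partial>distr p borel pi13)"
    using assms(1) by (subst nn_integral_distr) (auto simp: pi13_def
        intro!: continuous_borel_measurable_Mplus borel_measurable_continuous_onI continuous_intros)
  also have "\<dots> = W1 \<alpha> \<beta>" using assms(2) unfolding opt_couplings_def by simp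
  finally show ?thesis .
qed

definition Wg_plans :: "('a::euclidean_space \<times> 'a) measure \<Rightarrow> ('a \<times> 'a) measure
    \<Rightarrow> (('a \<times> 'a) \<times> ('a \<times> 'a)) measure set" where
  "Wg_plans V1 V2 = {p. \<exists>U1 U2.
        submeasure U1 V1 \<and> submeasure U2 V2 \<and> p \<in> transport_plans U1 U2 \<and>
        ennreal (BL_dist (distr V1 borel fst) (distr V2 borel fst)) =
          ennreal (TV_dist (distr V1 borel fst) (distr U1 borel fst))
          + ennreal (TV_dist (distr V2 borel fst) (distr U2 borel fst))
          + W1 (distr U1 borel fst) (distr U2 borel fst) \<and>
        distr p borel pi13 \<in> opt_couplings (distr U1 borel fst) (distr U2 borel fst)}"

lemma Wg_eq_INF_Wg_plans:
  "Wg V1 V2 = (INF p\<in>Wg_plans V1 V2. \<integral>\<^sup>+ z. ennreal (dist (snd (fst z)) (snd (snd z))) \<partial>p)"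
  unfolding Wg_def Wg_plans_def ..

lemma integral_diff_le_Wg_plan:
  assumes V1: "V1 \<in> Mplus" and V2: "V2 \<in> Mplus" and p: "p \<in> Wg_plans V1 V2"
    and \<phi>: "split_lipschitz_test \<tau> \<phi>" and \<tau>: "0 \<le> \<tau>"
  shows "ennreal (integral\<^sup>L V1 \<phi> - integral\<^sup>L V2 \<phi>)
    \<le> ennreal (BL_dist (distr V1 borel fst) (distr V2 borel fst))
       + ennreal \<tau> * (\<integral>\<^sup>+ z. ennreal (dist (snd (fst z)) (snd (snd z))) \<partial>p)"
proof -
  obtain U1 U2 where U1: "submeasure U1 V1" and U2: "submeasure U2 V2"
    and plan: "p \<in> transport_plans U1 U2"
    and split: "ennreal (BL_dist (distr V1 borel fst) (distr V2 borel fst)) =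
          ennreal (TV_dist (distr V1 borel fst) (distr U1 borel fst))
          + ennreal (TV_dist (distr V2 borel fst) (distr U2 borel fst))
          + W1 (distr U1 borel fst) (distr U2 borel fst)"
    and opt: "distr p borel pi13 \<in> opt_couplings (distr U1 borel fst) (distr U2 borel fst)"
    using p unfolding Wg_plans_def by blast
  define T1 where "T1 = TV_dist (distr V1 borel fst) (distr U1 borel fst)"
  define T2 where "T2 = TV_dist (distr V2 borel fst) (distr U2 borel fst)"
  have \<phi>m: "\<phi> \<in> borel_measurable borel" and \<phi>b: "\<And>z. \<bar>\<phi> z\<bar> \<le> 1"
    using \<phi> unfolding split_lipschitz_test_def by auto
  have mass1: "integral\<^sup>L V1 \<phi> - integral\<^sup>L U1 \<phi> \<le> T1"
    unfolding T1_def by (rule integral_diff_le_TV_dist_fst_submeasure[OF U1 V1 \<phi>m \<phi>b])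
  have mass2: "integral\<^sup>L U2 \<phi> - integral\<^sup>L V2 \<phi> \<le> T2"
    using integral_diff_le_TV_dist_fst_submeasure[OF U2 V2, of "\<lambda>z. - \<phi> z"] \<phi>m \<phi>b
    unfolding T2_def by simp
  have "ennreal (integral\<^sup>L V1 \<phi> - integral\<^sup>L V2 \<phi>)
      \<le> ennreal (T1 + T2 + (integral\<^sup>L U1 \<phi> - integral\<^sup>L U2 \<phi>))"
    using mass1 mass2 by (intro ennreal_leI) linarith
  also have "\<dots> \<le> ennreal T1 + ennreal T2 + ennreal (integral\<^sup>L U1 \<phi> - integral\<^sup>L U2 \<phi>)"
    by (meson add_mono ennreal_add_le order_refl order_trans)
  also have "\<dots> \<le> ennreal T1 + ennreal T2 + (W1 (distr U1 borel fst) (distr U2 borel fst)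
      + ennreal \<tau> * (\<integral>\<^sup>+ z. ennreal (dist (snd (fst z)) (snd (snd z))) \<partial>p))"
    using integral_diff_le_transport_cost[OF plan \<phi> \<tau>] plan opt
    by (simp add: nn_integral_position_cost_eq_W1 transport_plans_def add_left_mono)
  also have "\<dots> = ennreal (BL_dist (distr V1 borel fst) (distr V2 borel fst))
       + ennreal \<tau> * (\<integral>\<^sup>+ z. ennreal (dist (snd (fst z)) (snd (snd z))) \<partial>p)"
    unfolding split T1_def T2_def by (simp add: add.assoc)
  finally show ?thesis .
qed

lemma integral_diff_le_Wg:
  assumes V1: "V1 \<in> Mplus" and V2: "V2 \<in> Mplus" and finite: "Wg V1 V2 < top"
    and \<phi>: "split_lipschitz_test \<tau> \<phi>" and \<tau>: "0 \<le> \<tau>"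
  shows "ennreal (integral\<^sup>L V1 \<phi> - integral\<^sup>L V2 \<phi>)
    \<le> ennreal (BL_dist (distr V1 borel fst) (distr V2 borel fst)) + ennreal \<tau> * Wg V1 V2"
proof -
  define B where "B = BL_dist (distr V1 borel fst) (distr V2 borel fst)"
  define f where "f x = ennreal B + ennreal \<tau> * x" for x
  define S where "S = (\<lambda>p. \<integral>\<^sup>+ z. ennreal (dist (snd (fst z)) (snd (snd z))) \<partial>p) ` Wg_plans V1 V2"
  have Wg: "Wg V1 V2 = Inf S" unfolding S_def Wg_eq_INF_Wg_plans ..
  have "continuous_on UNIV f"
    unfolding f_def
    by (intro continuous_on_add_ennreal continuous_on_const ennreal_continuous_on_cmult continuous_on_id) simp
  then have "f (Inf S) = (INF s\<in>S. f s)"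
    using finite unfolding Wg
    by (intro continuous_at_Inf_mono)
      (auto simp: mono_def f_def mult_left_mono continuous_on_eq_continuous_within
        intro: continuous_within_subset)
  moreover have "ennreal (integral\<^sup>L V1 \<phi> - integral\<^sup>L V2 \<phi>) \<le> (INF s\<in>S. f s)"
    unfolding S_def f_def B_def using integral_diff_le_Wg_plan[OF V1 V2 _ \<phi> \<tau>]
    by (auto intro: INF_greatest)
  ultimately show ?thesis unfolding Wg f_def B_def by simp
qed

lemma integral_diff_le_BL_dist_if_Wg_le:
  assumes V1: "V1 \<in> Mplus" and V2: "V2 \<in> Mplus"
    and Wg: "Wg V1 V2 \<le> ennreal (CF * BL_dist (distr V1 borel fst) (distr V2 borel fst))"
    and \<phi>: "split_lipschitz_test \<tau> \<phi>" and \<tau>: "0 \<le> \<tau>"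
  shows "integral\<^sup>L V1 \<phi> - integral\<^sup>L V2 \<phi>
    \<le> (1 + \<bar>CF\<bar> * \<tau>) * BL_dist (distr V1 borel fst) (distr V2 borel fst)"
proof -
  define B where "B = BL_dist (distr V1 borel fst) (distr V2 borel fst)"
  have B: "0 \<le> B" unfolding B_def using V1 V2 by (intro BL_dist_nonneg distr_fst_Mplus)
  have "Wg V1 V2 < top" using le_less_trans[OF Wg ennreal_less_top] .
  then have "ennreal (integral\<^sup>L V1 \<phi> - integral\<^sup>L V2 \<phi>) \<le> ennreal B + ennreal \<tau> * Wg V1 V2"
    unfolding B_def by (rule integral_diff_le_Wg[OF V1 V2 _ \<phi> \<tau>])
  also have "\<dots> \<le> ennreal B + ennreal \<tau> * ennreal (\<bar>CF\<bar> * B)"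
  proof -
    have "Wg V1 V2 \<le> ennreal (\<bar>CF\<bar> * B)"
      using Wg B unfolding B_def[symmetric] by (meson abs_ge_self ennreal_leI mult_right_mono order_trans)
    then show ?thesis by (intro add_left_mono mult_left_mono) auto
  qed
  also have "\<dots> = ennreal ((1 + \<bar>CF\<bar> * \<tau>) * B)"
    using B \<tau> by (simp add: ennreal_plus[symmetric] ennreal_mult[symmetric] algebra_simps del: ennreal_plus)
  finally show ?thesis
    unfolding B_def[symmetric] using B \<tau> by (simp add: ennreal_le_iff)
qed

theorem lemmaA3:
  fixes V :: "'a::euclidean_space measure \<Rightarrow> ('a \<times> 'a) measure"
  assumes V_range: "\<forall>\<mu>\<in>Mplus. V \<mu> \<in> Mplus"
    and V_marg: "\<forall>\<mu>\<in>Mplus. distr (V \<mu>) borel fst = \<mu>"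
    and V_lip: "\<forall>R>0. \<exists>CF::real. \<forall>\<mu>\<in>Mplus. \<forall>\<nu>\<in>Mplus.
        supported_in \<mu> R \<and> supported_in \<nu> R \<longrightarrow>
        Wg (V \<mu>) (V \<nu>) \<le> ennreal (CF * BL_dist \<mu> \<nu>)"
  shows "(\<forall>R>0. \<exists>C::real. \<forall>\<mu>\<in>Mplus. \<forall>\<nu>\<in>Mplus.
            supported_in \<mu> R \<and> supported_in \<nu> R \<longrightarrow>
            BL_dist (V \<mu>) (V \<nu>) \<le> C * BL_dist \<mu> \<nu>)
       \<and> (\<forall>R>0. \<exists>CH::real. \<forall>\<mu>\<in>Mplus. \<forall>\<nu>\<in>Mplus.
            supported_in \<mu> R \<and> supported_in \<nu> R \<longrightarrow>
            (\<forall>\<tau>>0. V3_quantity \<tau> (V \<mu>) (V \<nu>) \<le> (1 + CH * \<tau>) * BL_dist \<mu> \<nu>))"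
proof -
  have "\<exists>C. \<forall>\<mu>\<in>Mplus. \<forall>\<nu>\<in>Mplus. supported_in \<mu> R \<and> supported_in \<nu> R \<longrightarrow>
      BL_dist (V \<mu>) (V \<nu>) \<le> (1 + C) * BL_dist \<mu> \<nu> \<and>
      (\<forall>\<tau>>0. V3_quantity \<tau> (V \<mu>) (V \<nu>) \<le> (1 + C * \<tau>) * BL_dist \<mu> \<nu>)"
    if R: "R > 0" for R
  proof -
    obtain CF where CF: "\<forall>\<mu>\<in>Mplus. \<forall>\<nu>\<in>Mplus. supported_in \<mu> R \<and> supported_in \<nu> R \<longrightarrow>
        Wg (V \<mu>) (V \<nu>) \<le> ennreal (CF * BL_dist \<mu> \<nu>)"
      using V_lip R by blast
    have "integral\<^sup>L (V \<mu>) \<phi> - integral\<^sup>L (V \<nu>) \<phi> \<le> (1 + \<bar>CF\<bar> * \<tau>) * BL_dist \<mu> \<nu>"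
      if "\<mu> \<in> Mplus" "\<nu> \<in> Mplus" "supported_in \<mu> R \<and> supported_in \<nu> R"
        and "split_lipschitz_test \<tau> \<phi>" "0 \<le> \<tau>" for \<mu> \<nu> \<tau> \<phi>
      using integral_diff_le_BL_dist_if_Wg_le[of "V \<mu>" "V \<nu>" CF \<tau> \<phi>] that CF V_range V_marg
      by simp
    from this this[of _ _ 1, simplified] show ?thesis
      by (intro exI[of _ "\<bar>CF\<bar>"] ballI impI conjI allI BL_dist_le_if_split_lipschitz_bound
          V3_quantity_le_if_split_lipschitz_bound) auto
  qed
  then show ?thesis by fast
qed

end
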